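(* Let $\mathfrak{G}$ be the Goldman Lie algebra of the closed torus over $\mathbb{Z}$, and define $G_0=\mathfrak{G}$ and $G_r=[\mathfrak{G},G_{r-1}]$ for $r\geq1$. Then the lower central series stabilizes: for every $r\geq 0$, $[\mathfrak{G},G_r]$ equals the $\mathbb{Z}$-submodule spanned by the elements $\gcd(i,j)\,a^ib^j$ for $i,j\in\mathbb{Z}\setminus\{0\}$, together with $n\,a^n$ and $n\,b^n$ for $n\in\mathbb{Z}\setminus\{0\}$.
   Context: Let $T^2=\Sigma_{1,0}$ be the closed oriented torus and $\hat\pi\cong\pi_1(T^2)\cong\mathbb{Z}^2$ its set of free homotopy classes of loops, written $a^ib^j$ with $a,b$ the standard generators. The Goldman bracket ($[\alpha,\beta]=\sum_{p\in\alpha\cap\beta}\epsilon(p)\,\alpha*_p\beta$ over transverse intersection points, extended bilinearly) is given on the torus by $[a^ib^j,a^kb^l]=(il-jk)\,a^{i+k}b^{j+l}$. The Goldman Lie algebra over $\mathbb{Z}$ is $\mathbb{Z}\hat\pi$ with this bracket; $[X,Y]$ denotes the $\mathbb{Z}$-span of brackets of elements of $X$ and $Y$. *)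

theory Defs
  imports Main "HOL-Library.Poly_Mapping"
begin

text \<open>The Goldman Lie algebra of the closed torus over the integers: the free
  Z-module on the free homotopy classes a^i b^j, i.e. finitely supported integer
  functions on Z x Z.\<close>

type_synonym goldman_torus = "(int \<times> int) \<Rightarrow>\<^sub>0 int"

definition loop :: "int \<Rightarrow> int \<Rightarrow> goldman_torus" where
  "loop i j = Poly_Mapping.single (i, j) 1"

text \<open>Goldman bracket, the bilinear extension of
  [a^i b^j, a^k b^l] = (il - jk) a^(i+k) b^(j+l).\<close>

definition gbracket :: "goldman_torus \<Rightarrow> goldman_torus \<Rightarrow> goldman_torus" where
  "gbracket x y =
     (\<Sum>p\<in>Poly_Mapping.keys x. \<Sum>q\<in>Poly_Mapping.keys y.
        Poly_Mapping.single (fst p + fst q, snd p + snd q)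
          (Poly_Mapping.lookup x p * Poly_Mapping.lookup y q * (fst p * snd q - snd p * fst q)))"

text \<open>Z-span (Z-submodule generated by a set) = additive subgroup generated.\<close>

inductive_set zspan :: "goldman_torus set \<Rightarrow> goldman_torus set" for S where
  zspan_zero: "0 \<in> zspan S"
| zspan_base: "s \<in> S \<Longrightarrow> s \<in> zspan S"
| zspan_diff: "x \<in> zspan S \<Longrightarrow> y \<in> zspan S \<Longrightarrow> x - y \<in> zspan S"

definition bracket_set :: "goldman_torus set \<Rightarrow> goldman_torus set \<Rightarrow> goldman_torus set" where
  "bracket_set X Y = zspan {gbracket x y | x y. x \<in> X \<and> y \<in> Y}"

fun lcs :: "nat \<Rightarrow> goldman_torus set" where
  "lcs 0 = UNIV"
| "lcs (Suc r) = bracket_set UNIV (lcs r)"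

end

theory Submission
  imports Defs
begin

text \<open>The bracket coefficient of a^i b^j and a^k b^l is il - jk = i(j+l) - j(i+k), a
  multiple of gcd(i+k, j+l); so every bracket lies in the span of the elements
  gcd(m,n) a^m b^n. Conversely, Bezout yields a splitting (m,n) = (i,j) + (k,l) with
  gcd(k,l) = 1 and il - jk = gcd(m,n), so gcd(m,n) a^m b^n = [a^i b^j, a^k b^l], where
  a^k b^l is itself one of these spanning elements. Hence this span is fixed by [G, -]
  and equals [G, G], and the lower central series is constant from G_1 on.\<close>

definition gcd_span :: "goldman_torus set" where
  "gcd_span = zspan (range (\<lambda>p. Poly_Mapping.single p (gcd (fst p) (snd p))))"

lemma zspan_uminus: "x \<in> zspan S \<Longrightarrow> - x \<in> zspan S"
  using zspan_diff[OF zspan_zero, of x S] by simp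

lemma zspan_add: "x \<in> zspan S \<Longrightarrow> y \<in> zspan S \<Longrightarrow> x + y \<in> zspan S"
  using zspan_diff[of x S "- y"] zspan_uminus[of y S] by simp

lemma zspan_sum: "(\<And>x. x \<in> A \<Longrightarrow> f x \<in> zspan S) \<Longrightarrow> sum f A \<in> zspan S"
  by (induction A rule: infinite_finite_induct) (simp_all add: zspan_zero zspan_add)

lemma zspan_subset_zspan: "S \<subseteq> zspan T \<Longrightarrow> zspan S \<subseteq> zspan T"
proof
  fix x assume "S \<subseteq> zspan T" and "x \<in> zspan S"
  from this(2) show "x \<in> zspan T"
    by (induction x rule: zspan.induct) (use \<open>S \<subseteq> zspan T\<close> in \<open>auto intro: zspan.intros\<close>)
qed

lemma zspan_mono: "S \<subseteq> T \<Longrightarrow> zspan S \<subseteq> zspan T"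
  by (rule zspan_subset_zspan) (auto intro: zspan_base)

lemma zspan_single_mult:
  assumes "Poly_Mapping.single p c \<in> zspan S"
  shows "Poly_Mapping.single p (e * c) \<in> zspan S"
proof -
  have nat_mult: "Poly_Mapping.single p (int n * c) \<in> zspan S" for n
  proof (induction n)
    case (Suc n)
    have "Poly_Mapping.single p (int (Suc n) * c) =
        Poly_Mapping.single p (int n * c) + Poly_Mapping.single p c"
      by (simp add: single_add[symmetric] algebra_simps)
    with Suc assms show ?case by (metis zspan_add)
  qed (simp add: zspan_zero)
  show ?thesis
  proof (cases "e \<ge> 0")
    case True
    then show ?thesis using nat_mult[of "nat e"] by simp
  next
    case False
    then have "Poly_Mapping.single p (e * c) = - Poly_Mapping.single p (int (nat (- e)) * c)"
      by (simp add: single_uminus[symmetric])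
    then show ?thesis using nat_mult[of "nat (- e)"] zspan_uminus by metis
  qed
qed

lemma zspan_single_abs_iff:
  "Poly_Mapping.single p \<bar>c\<bar> \<in> zspan S \<longleftrightarrow> Poly_Mapping.single p c \<in> zspan S"
  using zspan_single_mult[of p c S "sgn c"] zspan_single_mult[of p "\<bar>c\<bar>" S "sgn c"]
  by (metis abs_sgn mult.commute sgn_mult_abs)

lemma single_gcd_mem_gcd_span: "Poly_Mapping.single (m, n) (gcd m n) \<in> gcd_span"
  unfolding gcd_span_def by (intro zspan_base image_eqI[where x = "(m, n)"]) simp_all

lemma gcd_span_alt_def:
  "gcd_span = zspan ({Poly_Mapping.single (i, j) (gcd i j) | i j. i \<noteq> 0 \<and> j \<noteq> 0}
         \<union> {Poly_Mapping.single (n, 0) n | n. n \<noteq> 0}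
         \<union> {Poly_Mapping.single (0, n) n | n. n \<noteq> 0})"
  (is "_ = zspan ?gens")
proof (rule antisym)
  have "Poly_Mapping.single (m, n) (gcd m n) \<in> zspan ?gens" for m n :: int
  proof (cases "m = 0 \<or> n = 0")
    case True
    then show ?thesis
      using zspan_single_abs_iff[of "(m, 0)" m ?gens] zspan_single_abs_iff[of "(0, n)" n ?gens]
      by (auto intro: zspan_base zspan_zero)
  qed (blast intro: zspan_base)
  then show "gcd_span \<subseteq> zspan ?gens"
    unfolding gcd_span_def by (intro zspan_subset_zspan) auto
  have "Poly_Mapping.single (n, 0) n \<in> gcd_span" "Poly_Mapping.single (0, n) n \<in> gcd_span"
    for n :: int
    using single_gcd_mem_gcd_span[of n 0] single_gcd_mem_gcd_span[of 0 n]
    by (simp_all add: gcd_span_def zspan_single_abs_iff)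
  then show "zspan ?gens \<subseteq> gcd_span"
    using single_gcd_mem_gcd_span unfolding gcd_span_def by (intro zspan_subset_zspan) blast
qed

lemma single_mem_gcd_span: "gcd m n dvd c \<Longrightarrow> Poly_Mapping.single (m, n) c \<in> gcd_span"
  using zspan_single_mult[OF single_gcd_mem_gcd_span[unfolded gcd_span_def]]
  by (auto simp: gcd_span_def mult.commute elim!: dvdE)

lemma gbracket_single:
  "gbracket (Poly_Mapping.single p a) (Poly_Mapping.single q b) =
   Poly_Mapping.single (fst p + fst q, snd p + snd q) (a * b * (fst p * snd q - snd p * fst q))"
  by (cases "a = 0"; cases "b = 0") (simp_all add: gbracket_def)

lemma gcd_dvd_bracket_coeff:
  fixes i j k l :: int
  shows "gcd (i + k) (j + l) dvd i * l - j * k"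
proof -
  have "i * l - j * k = i * (j + l) - j * (i + k)"
    by (simp add: algebra_simps)
  then show ?thesis
    by simp
qed

lemma gbracket_mem_gcd_span: "gbracket x y \<in> gcd_span"
  unfolding gbracket_def gcd_span_def
  by (intro zspan_sum single_mem_gcd_span[unfolded gcd_span_def] dvd_mult gcd_dvd_bracket_coeff)

lemma coprime_splitting:
  fixes m n :: int
  obtains i j k l where "i + k = m" "j + l = n" "coprime k l" "i * l - j * k = gcd m n"
proof (cases "gcd m n = 0")
  case True
  then show ?thesis
    using that[of "-1" 1 0 0] by simp
next
  case False
  define d where "d = gcd m n"
  obtain m' n' where m': "m = d * m'" and n': "n = d * n'"
    unfolding d_def by (metis gcd_dvd1 gcd_dvd2 dvd_def)
  obtain u v where uv: "u * m + v * n = d"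
    unfolding d_def using bezout_int by blast
  have "d * (u * m' + v * n') = d * 1"
    using uv m' n' by (simp add: algebra_simps)
  then have uv': "u * m' + v * n' = 1"
    using False d_def by auto
  have "gcd (m - v) (n + u) dvd (m - v) * n' - (n + u) * m'"
    by (intro dvd_diff dvd_mult2 gcd_dvd1 gcd_dvd2)
  moreover have "(m - v) * n' - (n + u) * m' = -1"
    using uv' m' n' by (simp add: algebra_simps)
  ultimately have "coprime (m - v) (n + u)"
    by (simp add: coprime_iff_gcd_eq_1)
  moreover have "v * (n + u) - (- u) * (m - v) = gcd m n"
    using uv d_def by (simp add: algebra_simps)
  ultimately show ?thesis
    using that[of v "m - v" "- u" "n + u"] by simp
qed

lemma single_gcd_mem_bracket_set:
  "Poly_Mapping.single (m, n) (gcd m n) \<in> bracket_set UNIV gcd_span"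
proof -
  obtain i j k l where ik: "i + k = m" and jl: "j + l = n" and "coprime k l"
    and coeff: "i * l - j * k = gcd m n"
    using coprime_splitting .
  then have "loop k l = Poly_Mapping.single (k, l) (gcd k l)"
    by (simp add: loop_def coprime_iff_gcd_eq_1)
  then have "loop k l \<in> gcd_span"
    by (simp add: single_mem_gcd_span)
  then have "gbracket (loop i j) (loop k l) \<in> bracket_set UNIV gcd_span"
    unfolding bracket_set_def by (intro zspan_base) blast
  moreover have "gbracket (loop i j) (loop k l) = Poly_Mapping.single (m, n) (gcd m n)"
    unfolding loop_def gbracket_single using ik jl coeff by simp
  ultimately show ?thesis
    by simp
qed

lemma gcd_span_subset_bracket_set: "gcd_span \<subseteq> bracket_set UNIV gcd_span"
proof -
  have "range (\<lambda>p. Poly_Mapping.single p (gcd (fst p) (snd p))) \<subseteq> bracket_set UNIV gcd_span"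
    using single_gcd_mem_bracket_set by auto
  from zspan_subset_zspan[OF this[unfolded bracket_set_def]] show ?thesis
    by (fold gcd_span_def bracket_set_def)
qed

lemma bracket_set_mono: "X \<subseteq> X' \<Longrightarrow> Y \<subseteq> Y' \<Longrightarrow> bracket_set X Y \<subseteq> bracket_set X' Y'"
  unfolding bracket_set_def by (intro zspan_mono) blast

lemma bracket_set_UNIV_subset_gcd_span: "bracket_set UNIV Y \<subseteq> gcd_span"
  unfolding bracket_set_def gcd_span_def
  using gbracket_mem_gcd_span[unfolded gcd_span_def] by (intro zspan_subset_zspan) blast

lemma bracket_set_UNIV_gcd_span: "bracket_set UNIV gcd_span = gcd_span"
  using gcd_span_subset_bracket_set bracket_set_UNIV_subset_gcd_span by blast

lemma bracket_set_UNIV_UNIV: "bracket_set UNIV UNIV = gcd_span"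
  using gcd_span_subset_bracket_set bracket_set_mono[of UNIV UNIV gcd_span UNIV]
    bracket_set_UNIV_subset_gcd_span
  by blast

theorem mainTheorem5:
  fixes r :: nat
  shows "bracket_set UNIV (lcs r) =
    zspan ({Poly_Mapping.single (i, j) (gcd i j) | i j. i \<noteq> 0 \<and> j \<noteq> 0}
         \<union> {Poly_Mapping.single (n, 0) n | n. n \<noteq> 0}
         \<union> {Poly_Mapping.single (0, n) n | n. n \<noteq> 0})"
  unfolding gcd_span_alt_def[symmetric]
  by (induction r) (simp_all add: bracket_set_UNIV_UNIV bracket_set_UNIV_gcd_span)

end
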